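(* Let $\mathrm P$ be a probability measure on $\mathbb{R}^d$ with Lebesgue density $p$ supported on the open convex set $\mathcal X\subseteq\mathbb{R}^d$, with $p$ satisfying Assumption A. Then for every $\mathbf u\in\mathbb S_{d-1}$ and every sequence of reals $t_n\to\infty$ (such that $\varphi$ is differentiable at each $t_n\mathbf u$, so that $\mathbf F_\pm(t_n\mathbf u)=\nabla\varphi(t_n\mathbf u)$ is defined), $\lim_{n\to\infty}\mathbf F_\pm(t_n\mathbf u)=\mathbf u$.
   Context: $\mathbb{B}_d$ is the open unit ball of $\mathbb{R}^d$ and $\mathbb S_{d-1}$ the unit sphere. $\mathrm U_d$ is the spherical uniform distribution on $\mathbb B_d$ (density $u_d(\mathbf x)=\frac{1}{a_d|\mathbf x|^{d-1}}$ on $\mathbb B_d\setminus\{\mathbf 0\}$, $a_d=2\pi^{d/2}/\Gamma(d/2)$). $\psi$ is the convex lsc function on $\mathbb B_d$, normalized by $\psi(\mathbf 0)=0$, whose a.e. gradient pushes $\mathrm U_d$ forward to $\mathrm P$ (McCann), and $\varphi(\mathbf x)=\sup_{\mathbf u\in\mathbb B_d}(\langle\mathbf u,\mathbf x\rangle-\psi(\mathbf u))$, $\mathbf x\in\mathbb{R}^d$; the center-outward distribution function is $\mathbf F_\pm=\nabla\varphi$. Assumption A: for every $R>0$ there exist $0<\lambda_R\le\Lambda_R$ with $\lambda_R\le p(\mathbf x)\le\Lambda_R$ for all $\mathbf x\in\mathcal X$ with $|\mathbf x|<R$. *)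

theory Defs
  imports "HOL-Probability.Probability"
begin

definition sphere_area :: "nat \<Rightarrow> real" where
  "sphere_area d = 2 * pi powr (real d / 2) / Gamma (real d / 2)"

definition spherical_uniform :: "'a::euclidean_space measure" where
  "spherical_uniform = density lborel
     (\<lambda>x. ennreal (indicator (ball 0 1 - {0}) x
        / (sphere_area DIM('a) * norm x ^ (DIM('a) - 1))))"

text \<open>Gradient of f at x (meaningful where f is differentiable at x).\<close>
definition grad :: "('a::euclidean_space \<Rightarrow> real) \<Rightarrow> 'a \<Rightarrow> 'a" where
  "grad f x = (SOME v. (f has_derivative (\<lambda>h. v \<bullet> h)) (at x))"

definition conj_ball :: "('a::euclidean_space \<Rightarrow> real) \<Rightarrow> 'a \<Rightarrow> real" where
  "conj_ball \<psi> x = (SUP u\<in>ball 0 1. u \<bullet> x - \<psi> u)"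

text \<open>McCann potential: psi convex (hence continuous, so lsc) on the open unit ball,
  psi(0) = 0, and the a.e. gradient of psi pushes U_d forward to P.\<close>
definition mccann_potential :: "'a::euclidean_space measure \<Rightarrow> ('a \<Rightarrow> real) \<Rightarrow> bool" where
  "mccann_potential P \<psi> \<longleftrightarrow>
     convex_on (ball 0 1) \<psi> \<and> \<psi> 0 = 0 \<and>
     (AE u in spherical_uniform. \<psi> differentiable (at u)) \<and>
     grad \<psi> \<in> borel_measurable spherical_uniform \<and>
     distr spherical_uniform borel (grad \<psi>) = P"

definition center_outward_F :: "('a::euclidean_space \<Rightarrow> real) \<Rightarrow> 'a \<Rightarrow> 'a" where
  "center_outward_F \<psi> x = grad (conj_ball \<psi>) x"

definition assumption_A :: "('a::euclidean_space \<Rightarrow> real) \<Rightarrow> 'a set \<Rightarrow> bool" where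
  "assumption_A p X \<longleftrightarrow> (\<forall>R>0. \<exists>lam Lam. 0 < lam \<and> lam \<le> Lam \<and>
      (\<forall>x\<in>X. norm x < R \<longrightarrow> lam \<le> p x \<and> p x \<le> Lam))"

end

theory Submission
  imports Defs
begin

text \<open>For \<open>\<psi>\<close> convex on the unit ball, \<open>\<phi> = conj_ball \<psi>\<close> is a finite convex function with
  \<open>\<phi> y \<le> \<phi> x + |y - x|\<close>, so every gradient of \<open>\<phi>\<close> has norm at most 1. Along the ray \<open>s u\<close>,
  testing the supremum with \<open>(1 - \<epsilon>) u\<close> gives \<open>\<phi>(s u) \<ge> (1 - \<epsilon>) s - \<psi>((1 - \<epsilon>) u)\<close>, hence
  \<open>\<phi>(s u) / s \<rightarrow> 1\<close>. The tangent inequality at \<open>s u\<close>, tested against the origin, bounds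
  \<open>\<nabla>\<phi>(s u) \<bullet> u\<close> below by \<open>(\<phi>(s u) - \<phi> 0) / s \<rightarrow> 1\<close>; a vector of norm at most 1 whose
  component along the unit vector \<open>u\<close> tends to 1 must tend to \<open>u\<close>. Only the convexity of
  \<open>\<psi>\<close> enters.\<close>

lemma has_derivative_grad:
  fixes f :: "'a::euclidean_space \<Rightarrow> real"
  assumes "f differentiable (at x)"
  shows "(f has_derivative (\<lambda>h. grad f x \<bullet> h)) (at x)"
proof -
  obtain D where D: "(f has_derivative D) (at x)"
    using assms by (auto simp: differentiable_def)
  have "D = (\<lambda>h. adjoint D 1 \<bullet> h)"
    using adjoint_works[OF has_derivative_linear[OF D]] by (auto simp: inner_commute)
  with D have "\<exists>v. (f has_derivative (\<lambda>h. v \<bullet> h)) (at x)"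
    by metis
  then show ?thesis
    unfolding grad_def by (rule someI_ex)
qed

lemma convex_on_above_tangent_inner:
  fixes f :: "'a::real_inner \<Rightarrow> real"
  assumes cvx: "convex_on UNIV f"
    and der: "(f has_derivative (\<lambda>h. g \<bullet> h)) (at x)"
  shows "f x + g \<bullet> (y - x) \<le> f y"
proof -
  define l where "l s = x + s *\<^sub>R (y - x)" for s :: real
  have conv: "convex_on UNIV (f \<circ> l)"
  proof (rule convex_onI)
    fix t a b :: real assume "0 < t" "t < 1"
    have "l ((1 - t) *\<^sub>R a + t *\<^sub>R b) = (1 - t) *\<^sub>R l a + t *\<^sub>R l b"
      by (simp add: l_def algebra_simps)
    then show "(f \<circ> l) ((1 - t) *\<^sub>R a + t *\<^sub>R b) \<le> (1 - t) * (f \<circ> l) a + t * (f \<circ> l) b"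
      using convex_onD[OF cvx, of t "l a" "l b"] \<open>0 < t\<close> \<open>t < 1\<close> by simp
  qed simp
  have l: "(l has_derivative (\<lambda>s. s *\<^sub>R (y - x))) (at 0)"
    unfolding l_def by (auto intro!: derivative_eq_intros)
  have "(f has_derivative (\<lambda>h. g \<bullet> h)) (at (l 0))"
    using der by (simp add: l_def)
  from has_derivative_compose[OF l this]
  have "((f \<circ> l) has_field_derivative g \<bullet> (y - x)) (at 0 within UNIV)"
    unfolding has_field_derivative_def o_def
    by (rule has_derivative_eq_rhs) (auto simp: fun_eq_iff)
  then have "(f \<circ> l) 1 - (f \<circ> l) 0 \<ge> g \<bullet> (y - x) * (1 - 0)"
    by (intro convex_on_imp_above_tangent[OF conv]) auto
  then show ?thesis
    by (simp add: l_def)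
qed

lemma convex_on_unit_ball_bounded_below:
  fixes \<psi> :: "'a::euclidean_space \<Rightarrow> real"
  assumes cvx: "convex_on (ball 0 1) \<psi>"
  obtains B where "\<And>v. v \<in> ball 0 1 \<Longrightarrow> B \<le> \<psi> v"
proof -
  have "continuous_on (cball 0 (1/2)) \<psi>"
    by (rule continuous_on_subset[OF convex_on_continuous[OF open_ball cvx]]) auto
  then have "bounded (\<psi> ` cball 0 (1/2))"
    by (intro compact_imp_bounded compact_continuous_image) auto
  then obtain M where M: "\<And>w. w \<in> cball 0 (1/2) \<Longrightarrow> \<psi> w \<le> M"
    unfolding bounded_real by (meson abs_le_D1 imageI)
  show ?thesis
  proof (rule that[of "3 * \<psi> 0 - 2 * M"])
    fix v :: 'a assume v: "v \<in> ball 0 1"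
    have w: "- (1/2) *\<^sub>R v \<in> ball 0 1" "- (1/2) *\<^sub>R v \<in> cball 0 (1/2)"
      using v by auto
    have "(1 - 2/3) *\<^sub>R v + (2/3) *\<^sub>R (- (1/2) *\<^sub>R v) = (0::'a)"
      by (simp add: algebra_simps)
    then have "\<psi> 0 \<le> (1/3) * \<psi> v + (2/3) * \<psi> (- (1/2) *\<^sub>R v)"
      using convex_onD[OF cvx, of "2/3" v "- (1/2) *\<^sub>R v"] v w by simp
    then show "3 * \<psi> 0 - 2 * M \<le> \<psi> v"
      using M[OF w(2)] by simp
  qed
qed

lemma bdd_above_conj_ball:
  fixes \<psi> :: "'a::euclidean_space \<Rightarrow> real"
  assumes "convex_on (ball 0 1) \<psi>"
  shows "bdd_above ((\<lambda>v. v \<bullet> x - \<psi> v) ` ball 0 1)"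
proof -
  obtain B where B: "\<And>v. v \<in> ball 0 1 \<Longrightarrow> B \<le> \<psi> v"
    using convex_on_unit_ball_bounded_below[OF assms] by blast
  show ?thesis
  proof (rule bdd_aboveI2)
    fix v :: 'a assume v: "v \<in> ball 0 1"
    have "v \<bullet> x \<le> norm v * norm x"
      by (rule norm_cauchy_schwarz)
    also have "\<dots> \<le> norm x"
      using v by (simp add: mult_left_le_one_le)
    finally show "v \<bullet> x - \<psi> v \<le> norm x - B"
      using B[OF v] by simp
  qed
qed

lemma le_conj_ball:
  fixes \<psi> :: "'a::euclidean_space \<Rightarrow> real"
  assumes "convex_on (ball 0 1) \<psi>" and "v \<in> ball 0 1"
  shows "v \<bullet> x - \<psi> v \<le> conj_ball \<psi> x"
  unfolding conj_ball_def by (rule cSUP_upper[OF assms(2) bdd_above_conj_ball[OF assms(1)]])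

lemma conj_ball_le_add_norm:
  fixes \<psi> :: "'a::euclidean_space \<Rightarrow> real"
  assumes "convex_on (ball 0 1) \<psi>"
  shows "conj_ball \<psi> y \<le> conj_ball \<psi> x + norm (y - x)"
  unfolding conj_ball_def[of \<psi> y]
proof (rule cSUP_least)
  fix v :: 'a assume v: "v \<in> ball 0 1"
  have "v \<bullet> (y - x) \<le> norm v * norm (y - x)"
    by (rule norm_cauchy_schwarz)
  also have "\<dots> \<le> norm (y - x)"
    using v by (simp add: mult_left_le_one_le)
  finally show "v \<bullet> y - \<psi> v \<le> conj_ball \<psi> x + norm (y - x)"
    using le_conj_ball[OF assms v, of x] by (simp add: inner_diff_right)
qed simp

lemma convex_on_conj_ball:
  fixes \<psi> :: "'a::euclidean_space \<Rightarrow> real"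
  assumes "convex_on (ball 0 1) \<psi>"
  shows "convex_on UNIV (conj_ball \<psi>)"
proof (rule convex_onI)
  fix s :: real and x y :: 'a
  assume s: "0 < s" "s < 1"
  show "conj_ball \<psi> ((1 - s) *\<^sub>R x + s *\<^sub>R y) \<le> (1 - s) * conj_ball \<psi> x + s * conj_ball \<psi> y"
    unfolding conj_ball_def[of \<psi> "(1 - s) *\<^sub>R x + s *\<^sub>R y"]
  proof (rule cSUP_least)
    fix v :: 'a assume v: "v \<in> ball 0 1"
    have "v \<bullet> ((1 - s) *\<^sub>R x + s *\<^sub>R y) - \<psi> v = (1 - s) * (v \<bullet> x - \<psi> v) + s * (v \<bullet> y - \<psi> v)"
      by (simp add: algebra_simps)
    also have "\<dots> \<le> (1 - s) * conj_ball \<psi> x + s * conj_ball \<psi> y"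
      using le_conj_ball[OF assms v] s by (intro add_mono mult_left_mono) auto
    finally show "v \<bullet> ((1 - s) *\<^sub>R x + s *\<^sub>R y) - \<psi> v \<le> (1 - s) * conj_ball \<psi> x + s * conj_ball \<psi> y" .
  qed simp
qed simp

lemma norm_le_one_if_has_derivative_1_lipschitz:
  fixes f :: "'a::real_inner \<Rightarrow> real"
  assumes "convex_on UNIV f" and "(f has_derivative (\<lambda>h. g \<bullet> h)) (at x)"
    and lip: "\<And>y. f y \<le> f x + norm (y - x)"
  shows "norm g \<le> 1"
proof -
  have "norm g * norm g \<le> norm g * 1"
    using convex_on_above_tangent_inner[OF assms(1,2), of "x + g"] lip[of "x + g"]
    by (simp add: power2_norm_eq_inner[symmetric] power2_eq_square)
  then show ?thesis
    using mult_le_cancel_left[of "norm g" "norm g" 1] by auto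
qed

lemma conj_ball_ray_asymptotic:
  fixes \<psi> :: "'a::euclidean_space \<Rightarrow> real"
  assumes cvx: "convex_on (ball 0 1) \<psi>" and u: "norm u = 1"
  shows "((\<lambda>s. conj_ball \<psi> (s *\<^sub>R u) / s) \<longlongrightarrow> 1) at_top"
proof (rule order_tendstoI)
  fix a :: real assume "a < 1"
  define \<epsilon> where "\<epsilon> = (1 - max a 0) / 2"
  have \<epsilon>: "0 < \<epsilon>" "\<epsilon> < 1" "a < 1 - \<epsilon>"
    using \<open>a < 1\<close> by (auto simp: \<epsilon>_def max_def field_simps)
  define v where "v = (1 - \<epsilon>) *\<^sub>R u"
  have v: "v \<in> ball 0 1"
    using \<epsilon> u by (simp add: v_def)
  have "((\<lambda>s. (1 - \<epsilon>) - \<psi> v / s) \<longlongrightarrow> (1 - \<epsilon>) - 0) at_top"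
    by (intro tendsto_intros tendsto_divide_0[OF tendsto_const] filterlim_at_top_imp_at_infinity
        filterlim_ident)
  then have "eventually (\<lambda>s. a < (1 - \<epsilon>) - \<psi> v / s) at_top"
    using \<epsilon>(3) by (simp add: order_tendstoD(1))
  moreover have "eventually (\<lambda>s. (0::real) < s) at_top"
    by (rule eventually_gt_at_top)
  ultimately show "eventually (\<lambda>s. a < conj_ball \<psi> (s *\<^sub>R u) / s) at_top"
  proof eventually_elim
    case (elim s)
    have "v \<bullet> (s *\<^sub>R u) = (1 - \<epsilon>) * s"
      using u by (simp add: v_def dot_square_norm)
    then have "(1 - \<epsilon>) * s - \<psi> v \<le> conj_ball \<psi> (s *\<^sub>R u)"
      using le_conj_ball[OF cvx v, of "s *\<^sub>R u"] by linarith
    then have "((1 - \<epsilon>) * s - \<psi> v) / s \<le> conj_ball \<psi> (s *\<^sub>R u) / s"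
      using elim(2) by (simp add: divide_right_mono)
    moreover have "((1 - \<epsilon>) * s - \<psi> v) / s = (1 - \<epsilon>) - \<psi> v / s"
      using elim(2) by (simp add: field_simps)
    ultimately show ?case
      using elim by linarith
  qed
next
  fix a :: real assume "1 < a"
  have "((\<lambda>s. 1 + conj_ball \<psi> 0 / s) \<longlongrightarrow> 1 + 0) at_top"
    by (intro tendsto_intros tendsto_divide_0[OF tendsto_const] filterlim_at_top_imp_at_infinity
        filterlim_ident)
  then have "eventually (\<lambda>s. 1 + conj_ball \<psi> 0 / s < a) at_top"
    using \<open>1 < a\<close> by (simp add: order_tendstoD(2))
  moreover have "eventually (\<lambda>s. (0::real) < s) at_top"
    by (rule eventually_gt_at_top)
  ultimately show "eventually (\<lambda>s. conj_ball \<psi> (s *\<^sub>R u) / s < a) at_top"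
  proof eventually_elim
    case (elim s)
    have "conj_ball \<psi> (s *\<^sub>R u) \<le> conj_ball \<psi> 0 + s"
      using conj_ball_le_add_norm[OF cvx, of "s *\<^sub>R u" 0] elim(2) u by simp
    then have "conj_ball \<psi> (s *\<^sub>R u) / s \<le> (conj_ball \<psi> 0 + s) / s"
      using elim(2) by (simp add: divide_right_mono)
    moreover have "(conj_ball \<psi> 0 + s) / s = 1 + conj_ball \<psi> 0 / s"
      using elim(2) by (simp add: field_simps)
    ultimately show ?case
      using elim by linarith
  qed
qed

lemma tendsto_unit_vector_if_inner_tendsto_1:
  fixes g :: "'b \<Rightarrow> 'a::real_inner"
  assumes u: "norm u = 1" and g: "\<And>n. norm (g n) \<le> 1"
    and lim: "((\<lambda>n. g n \<bullet> u) \<longlongrightarrow> 1) F"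
  shows "(g \<longlongrightarrow> u) F"
proof (rule LIM_zero_cancel, rule Lim_null_comparison)
  have "norm (g n - u) ^ 2 \<le> 2 - 2 * (g n \<bullet> u)" for n
  proof -
    have "norm (g n - u) ^ 2 = norm (g n) ^ 2 - 2 * (g n \<bullet> u) + norm u ^ 2"
      by (simp add: power2_norm_eq_inner inner_diff_left inner_diff_right inner_commute)
    then show ?thesis
      using g[of n] u by (simp add: power_le_one)
  qed
  then show "eventually (\<lambda>n. norm (g n - u) \<le> sqrt (2 - 2 * (g n \<bullet> u))) F"
    by (intro always_eventually allI real_le_rsqrt)
  show "((\<lambda>n. sqrt (2 - 2 * (g n \<bullet> u))) \<longlongrightarrow> 0) F"
    using tendsto_real_sqrt[OF tendsto_diff[OF tendsto_const tendsto_mult[OF tendsto_const lim]],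
        of 2 2] by simp
qed

lemma tendsto_grad_conj_ball_along_ray:
  fixes \<psi> :: "'a::euclidean_space \<Rightarrow> real" and t :: "'b \<Rightarrow> real"
  assumes cvx: "convex_on (ball 0 1) \<psi>" and u1: "norm u = 1"
    and t: "filterlim t at_top F"
    and diff: "\<And>n. conj_ball \<psi> differentiable (at (t n *\<^sub>R u))"
  shows "((\<lambda>n. grad (conj_ball \<psi>) (t n *\<^sub>R u)) \<longlongrightarrow> u) F"
proof -
  define \<phi> where "\<phi> = conj_ball \<psi>"
  define g where "g n = grad \<phi> (t n *\<^sub>R u)" for n
  have cvx\<phi>: "convex_on UNIV \<phi>"
    unfolding \<phi>_def by (rule convex_on_conj_ball[OF cvx])
  have der: "(\<phi> has_derivative (\<lambda>h. g n \<bullet> h)) (at (t n *\<^sub>R u))" for n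
    unfolding g_def \<phi>_def by (rule has_derivative_grad[OF diff])
  have g_norm: "norm (g n) \<le> 1" for n
    using norm_le_one_if_has_derivative_1_lipschitz[OF cvx\<phi> der]
      conj_ball_le_add_norm[OF cvx] by (simp add: \<phi>_def)
  have lower_lim: "((\<lambda>n. \<phi> (t n *\<^sub>R u) / t n - \<phi> 0 / t n) \<longlongrightarrow> 1) F"
    using tendsto_diff[OF filterlim_compose[OF conj_ball_ray_asymptotic[OF cvx u1] t]
        tendsto_divide_0[OF tendsto_const filterlim_at_top_imp_at_infinity[OF t]]]
    by (simp add: \<phi>_def)
  have "eventually (\<lambda>n. 0 < t n) F"
    using t by (simp add: filterlim_at_top_dense)
  then have lower: "eventually (\<lambda>n. \<phi> (t n *\<^sub>R u) / t n - \<phi> 0 / t n \<le> g n \<bullet> u) F"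
  proof eventually_elim
    case (elim n)
    have "\<phi> (t n *\<^sub>R u) - \<phi> 0 \<le> t n * (g n \<bullet> u)"
      using convex_on_above_tangent_inner[OF cvx\<phi> der[of n], of 0] by simp
    then show ?case
      using elim by (simp add: field_simps)
  qed
  have upper: "g n \<bullet> u \<le> 1" for n
    using norm_cauchy_schwarz[of "g n" u] g_norm[of n] u1 by simp
  have "((\<lambda>n. g n \<bullet> u) \<longlongrightarrow> 1) F"
    by (rule tendsto_sandwich[OF lower always_eventually[OF allI[OF upper]] lower_lim tendsto_const])
  then show ?thesis
    unfolding \<phi>_def[symmetric] g_def[symmetric]
    by (rule tendsto_unit_vector_if_inner_tendsto_1[OF u1 g_norm])
qed

theorem corollary3p2:
  fixes p :: "'a::euclidean_space \<Rightarrow> real" and X :: "'a set"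
    and \<psi> :: "'a \<Rightarrow> real" and u :: 'a and t :: "nat \<Rightarrow> real"
  assumes p_meas: "p \<in> borel_measurable borel"
    and p_nonneg: "\<And>x. 0 \<le> p x"
    and P_prob: "prob_space (density lborel (\<lambda>x. ennreal (p x)))"
    and X_open: "open X" and X_convex: "convex X"
    and p_supp: "\<And>x. x \<notin> X \<Longrightarrow> p x = 0"
    and A: "assumption_A p X"
    and psi: "mccann_potential (density lborel (\<lambda>x. ennreal (p x))) \<psi>"
    and u: "u \<in> sphere 0 1"
    and t: "filterlim t at_top sequentially"
    and diff: "\<And>n. conj_ball \<psi> differentiable (at (t n *\<^sub>R u))"
  shows "(\<lambda>n. center_outward_F \<psi> (t n *\<^sub>R u)) \<longlonglongrightarrow> u"
proof -
  have "convex_on (ball 0 1) \<psi>"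
    using psi by (simp add: mccann_potential_def)
  moreover have "norm u = 1"
    using u by simp
  ultimately show ?thesis
    unfolding center_outward_F_def by (rule tendsto_grad_conj_ball_along_ray[OF _ _ t diff])
qed

end
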